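(* (Soundness.) For every partial correctness assertion $\{A\}c\{B\}$ of IPPL, if $\vdash\{A\}c\{B\}$ then $\models\{A\}c\{B\}$.
   Context: IPPL: let $\mathbf{Loc}$ be a set of locations $X$, $\mathbf{Intvar}$ a set of integer variables $i$; states are $\sigma:\mathbf{Loc}\to\mathbb{Z}$, interpretations are $I:\mathbf{Intvar}\to\mathbb{Z}$. Arithmetic expressions $a::=n\mid X\mid i\mid a_0+a_1\mid a_0-a_1\mid a_0\times a_1$; Boolean expressions $b::=\mathbf{true}\mid\mathbf{false}\mid a_0=a_1\mid a_0\leq a_1\mid\neg b\mid b_0\wedge b_1\mid b_0\vee b_1$; assertions $A::=\mathbf{true}\mid\mathbf{false}\mid a_0=a_1\mid a_0\leq a_1\mid\neg A\mid A_0\wedge A_1\mid A_0\vee A_1\mid A_0\Rightarrow A_1\mid\forall i.A\mid\exists i.A$, with the usual satisfaction relation $\sigma\models^I A$; $\models A$ means $\sigma\models^I A$ for all $\sigma,I$. Commands: $c::=\mathbf{skip}\mid X:=a\mid c_0;c_1\mid\mathbf{if}\ b\ \mathbf{then}\ c_0\ \mathbf{else}\ c_1\mid\mathbf{while}\ b\ \mathbf{do}\ c\mid c_0\parallel c_1$ (expressions in commands contain no integer variables). Execution $\langle c,\sigma\rangle\rightarrow\sigma'$ is the least relation closed under the standard big-step rules for skip, assignment ($\sigma[X\mapsto$ value of $a$ in $\sigma]$), sequencing, conditional and while loop, together with: if there are states $\sigma'',\sigma'''$ with $\langle c_0,\sigma\rangle\rightarrow\sigma''$, $\langle c_1,\sigma''\rangle\rightarrow\sigma'$,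 $\langle c_1,\sigma\rangle\rightarrow\sigma'''$ and $\langle c_0,\sigma'''\rangle\rightarrow\sigma'$ then $\langle c_0\parallel c_1,\sigma\rangle\rightarrow\sigma'$. The meaning $\mathcal{C}[\![c]\!]$ of $c$ is the partial function $\{(\sigma,\sigma')\mid\langle c,\sigma\rangle\rightarrow\sigma'\}$. Validity: $\models\{A\}c\{B\}$ iff for every interpretation $I$ and states $\sigma,\sigma'$, if $\sigma\models^I A$ and $\langle c,\sigma\rangle\rightarrow\sigma'$ then $\sigma'\models^I B$. Provability $\vdash\{A\}c\{B\}$ is derivability with the rules: $\{A\}\mathbf{skip}\{A\}$; $\{B[a/X]\}X:=a\{B\}$; from $\{A\}c_0\{C\}$ and $\{C\}c_1\{B\}$ infer $\{A\}c_0;c_1\{B\}$; from $\{A\wedge b\}c_0\{B\}$ and $\{A\wedge\neg b\}c_1\{B\}$ infer $\{A\}\mathbf{if}\ b\ \mathbf{then}\ c_0\ \mathbf{else}\ c_1\{B\}$; from $\{A\wedge b\}c\{A\}$ infer $\{A\}\mathbf{while}\ b\ \mathbf{do}\ c\{A\wedge\neg b\}$; from $\models(A\Rightarrow A')$, $\{A'\}c\{B'\}$, $\models(B'\Rightarrow B)$ infer $\{A\}c\{B\}$; from $\{A\}c_0\{C\}$, $\{C\}c_1\{B\}$, $\{A\}c_1\{D\}$, $\{D\}c_0\{B\}$ infer $\{A\}c_0\parallel c_1\{B\}$. *)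

theory Defs
  imports Main
begin

type_synonym 'l state = "'l \<Rightarrow> int"
type_synonym 'i interp = "'i \<Rightarrow> int"

datatype 'l aexp = N int | Loc 'l | Plus "'l aexp" "'l aexp"
  | Minus "'l aexp" "'l aexp" | Times "'l aexp" "'l aexp"

datatype 'l bexp = BTrue | BFalse | BEq "'l aexp" "'l aexp" | BLe "'l aexp" "'l aexp"
  | BNot "'l bexp" | BAnd "'l bexp" "'l bexp" | BOr "'l bexp" "'l bexp"

fun aval :: "'l aexp \<Rightarrow> 'l state \<Rightarrow> int" where
  "aval (N n) s = n"
| "aval (Loc X) s = s X"
| "aval (Plus a0 a1) s = aval a0 s + aval a1 s"
| "aval (Minus a0 a1) s = aval a0 s - aval a1 s"
| "aval (Times a0 a1) s = aval a0 s * aval a1 s"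

fun bval :: "'l bexp \<Rightarrow> 'l state \<Rightarrow> bool" where
  "bval BTrue s = True"
| "bval BFalse s = False"
| "bval (BEq a0 a1) s = (aval a0 s = aval a1 s)"
| "bval (BLe a0 a1) s = (aval a0 s \<le> aval a1 s)"
| "bval (BNot b) s = (\<not> bval b s)"
| "bval (BAnd b0 b1) s = (bval b0 s \<and> bval b1 s)"
| "bval (BOr b0 b1) s = (bval b0 s \<or> bval b1 s)"

datatype ('l, 'i) aexpv = VN int | VLoc 'l | VIvar 'i | VPlus "('l, 'i) aexpv" "('l, 'i) aexpv"
  | VMinus "('l, 'i) aexpv" "('l, 'i) aexpv" | VTimes "('l, 'i) aexpv" "('l, 'i) aexpv"

datatype ('l, 'i) assn = ATrue | AFalse | AEq "('l, 'i) aexpv" "('l, 'i) aexpv"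
  | ALe "('l, 'i) aexpv" "('l, 'i) aexpv" | ANot "('l, 'i) assn"
  | AAnd "('l, 'i) assn" "('l, 'i) assn" | AOr "('l, 'i) assn" "('l, 'i) assn"
  | AImp "('l, 'i) assn" "('l, 'i) assn" | AAll 'i "('l, 'i) assn" | AEx 'i "('l, 'i) assn"

fun avalv :: "('l, 'i) aexpv \<Rightarrow> 'l state \<Rightarrow> 'i interp \<Rightarrow> int" where
  "avalv (VN n) s I = n"
| "avalv (VLoc X) s I = s X"
| "avalv (VIvar i) s I = I i"
| "avalv (VPlus a0 a1) s I = avalv a0 s I + avalv a1 s I"
| "avalv (VMinus a0 a1) s I = avalv a0 s I - avalv a1 s I"
| "avalv (VTimes a0 a1) s I = avalv a0 s I * avalv a1 s I"

fun sat :: "'l state \<Rightarrow> 'i interp \<Rightarrow> ('l, 'i) assn \<Rightarrow> bool" where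
  "sat s I ATrue = True"
| "sat s I AFalse = False"
| "sat s I (AEq a0 a1) = (avalv a0 s I = avalv a1 s I)"
| "sat s I (ALe a0 a1) = (avalv a0 s I \<le> avalv a1 s I)"
| "sat s I (ANot A) = (\<not> sat s I A)"
| "sat s I (AAnd A0 A1) = (sat s I A0 \<and> sat s I A1)"
| "sat s I (AOr A0 A1) = (sat s I A0 \<or> sat s I A1)"
| "sat s I (AImp A0 A1) = (sat s I A0 \<longrightarrow> sat s I A1)"
| "sat s I (AAll i A) = (\<forall>n. sat s (I(i := n)) A)"
| "sat s I (AEx i A) = (\<exists>n. sat s (I(i := n)) A)"

definition valid_assn :: "('l, 'i) assn \<Rightarrow> bool" where
  "valid_assn A \<longleftrightarrow> (\<forall>s I. sat s I A)"

fun emb_a :: "'l aexp \<Rightarrow> ('l, 'i) aexpv" where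
  "emb_a (N n) = VN n"
| "emb_a (Loc X) = VLoc X"
| "emb_a (Plus a0 a1) = VPlus (emb_a a0) (emb_a a1)"
| "emb_a (Minus a0 a1) = VMinus (emb_a a0) (emb_a a1)"
| "emb_a (Times a0 a1) = VTimes (emb_a a0) (emb_a a1)"

fun emb_b :: "'l bexp \<Rightarrow> ('l, 'i) assn" where
  "emb_b BTrue = ATrue"
| "emb_b BFalse = AFalse"
| "emb_b (BEq a0 a1) = AEq (emb_a a0) (emb_a a1)"
| "emb_b (BLe a0 a1) = ALe (emb_a a0) (emb_a a1)"
| "emb_b (BNot b) = ANot (emb_b b)"
| "emb_b (BAnd b0 b1) = AAnd (emb_b b0) (emb_b b1)"
| "emb_b (BOr b0 b1) = AOr (emb_b b0) (emb_b b1)"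

text \<open>Substitution B[a/X]; since a contains no integer variables, no capture can occur.\<close>
fun subst_a :: "('l, 'i) aexpv \<Rightarrow> 'l aexp \<Rightarrow> 'l \<Rightarrow> ('l, 'i) aexpv" where
  "subst_a (VN n) a X = VN n"
| "subst_a (VLoc Y) a X = (if Y = X then emb_a a else VLoc Y)"
| "subst_a (VIvar i) a X = VIvar i"
| "subst_a (VPlus a0 a1) a X = VPlus (subst_a a0 a X) (subst_a a1 a X)"
| "subst_a (VMinus a0 a1) a X = VMinus (subst_a a0 a X) (subst_a a1 a X)"
| "subst_a (VTimes a0 a1) a X = VTimes (subst_a a0 a X) (subst_a a1 a X)"

fun subst :: "('l, 'i) assn \<Rightarrow> 'l aexp \<Rightarrow> 'l \<Rightarrow> ('l, 'i) assn" where
  "subst ATrue a X = ATrue"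
| "subst AFalse a X = AFalse"
| "subst (AEq a0 a1) a X = AEq (subst_a a0 a X) (subst_a a1 a X)"
| "subst (ALe a0 a1) a X = ALe (subst_a a0 a X) (subst_a a1 a X)"
| "subst (ANot A) a X = ANot (subst A a X)"
| "subst (AAnd A0 A1) a X = AAnd (subst A0 a X) (subst A1 a X)"
| "subst (AOr A0 A1) a X = AOr (subst A0 a X) (subst A1 a X)"
| "subst (AImp A0 A1) a X = AImp (subst A0 a X) (subst A1 a X)"
| "subst (AAll i A) a X = AAll i (subst A a X)"
| "subst (AEx i A) a X = AEx i (subst A a X)"

datatype 'l com = Skip | Assign 'l "'l aexp" | Seq "'l com" "'l com"
  | If "'l bexp" "'l com" "'l com" | While "'l bexp" "'l com" | Par "'l com" "'l com"

inductive exec :: "'l com \<Rightarrow> 'l state \<Rightarrow> 'l state \<Rightarrow> bool" where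
  exec_Skip: "exec Skip s s"
| exec_Assign: "exec (Assign X a) s (s(X := aval a s))"
| exec_Seq: "exec c0 s s'' \<Longrightarrow> exec c1 s'' s' \<Longrightarrow> exec (Seq c0 c1) s s'"
| exec_IfT: "bval b s \<Longrightarrow> exec c0 s s' \<Longrightarrow> exec (If b c0 c1) s s'"
| exec_IfF: "\<not> bval b s \<Longrightarrow> exec c1 s s' \<Longrightarrow> exec (If b c0 c1) s s'"
| exec_WhileF: "\<not> bval b s \<Longrightarrow> exec (While b c) s s"
| exec_WhileT: "bval b s \<Longrightarrow> exec c s s'' \<Longrightarrow> exec (While b c) s'' s' \<Longrightarrow> exec (While b c) s s'"
| exec_Par: "exec c0 s s'' \<Longrightarrow> exec c1 s'' s' \<Longrightarrow> exec c1 s s''' \<Longrightarrow> exec c0 s''' s'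
             \<Longrightarrow> exec (Par c0 c1) s s'"

definition hvalid :: "('l, 'i) assn \<Rightarrow> 'l com \<Rightarrow> ('l, 'i) assn \<Rightarrow> bool" where
  "hvalid A c B \<longleftrightarrow> (\<forall>I s s'. sat s I A \<longrightarrow> exec c s s' \<longrightarrow> sat s' I B)"

inductive hoare :: "('l, 'i) assn \<Rightarrow> 'l com \<Rightarrow> ('l, 'i) assn \<Rightarrow> bool" where
  H_Skip: "hoare A Skip A"
| H_Assign: "hoare (subst B a X) (Assign X a) B"
| H_Seq: "hoare A c0 C \<Longrightarrow> hoare C c1 B \<Longrightarrow> hoare A (Seq c0 c1) B"
| H_If: "hoare (AAnd A (emb_b b)) c0 B \<Longrightarrow> hoare (AAnd A (ANot (emb_b b))) c1 B
         \<Longrightarrow> hoare A (If b c0 c1) B"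
| H_While: "hoare (AAnd A (emb_b b)) c A \<Longrightarrow> hoare A (While b c) (AAnd A (ANot (emb_b b)))"
| H_Conseq: "valid_assn (AImp A A') \<Longrightarrow> hoare A' c B' \<Longrightarrow> valid_assn (AImp B' B)
             \<Longrightarrow> hoare A c B"
| H_Par: "hoare A c0 C \<Longrightarrow> hoare C c1 B \<Longrightarrow> hoare A c1 D \<Longrightarrow> hoare D c0 B
          \<Longrightarrow> hoare A (Par c0 c1) B"

end

theory Submission
  imports Defs
begin

text \<open>The assignment rule rests on the
  substitution lemma (B[a/X] holds in a state iff B holds after the update), and the loop rule needs
  an inner induction over the iterations of an execution, along which the invariant propagates.\<close>

lemma avalv_emb_a [simp]: "avalv (emb_a a) s I = aval a s"
  by (induction a) auto

lemma sat_emb_b [simp]: "sat s I (emb_b b) = bval b s"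
  by (induction b) auto

lemma avalv_subst_a: "avalv (subst_a e a X) s I = avalv e (s(X := aval a s)) I"
  by (induction e) auto

lemma sat_subst: "sat s I (subst B a X) = sat (s(X := aval a s)) I B"
  by (induction B arbitrary: I) (auto simp: avalv_subst_a)

inductive_cases exec_SkipE: "exec Skip s s'"
inductive_cases exec_AssignE: "exec (Assign X a) s s'"
inductive_cases exec_SeqE: "exec (Seq c0 c1) s s'"
inductive_cases exec_IfE: "exec (If b c0 c1) s s'"
inductive_cases exec_ParE: "exec (Par c0 c1) s s'"

lemma exec_While_invariant:
  assumes "exec (While b c) s s'"
    and "\<And>t t'. P t \<Longrightarrow> bval b t \<Longrightarrow> exec c t t' \<Longrightarrow> P t'"
    and "P s"
  shows "P s' \<and> \<not> bval b s'"
  using assms by (induction "While b c" s s' rule: exec.induct) auto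

lemma hvalid_Skip: "hvalid A Skip A"
  by (auto simp: hvalid_def elim: exec_SkipE)

lemma hvalid_Assign: "hvalid (subst B a X) (Assign X a) B"
  by (auto simp: hvalid_def sat_subst elim: exec_AssignE)

lemma hvalid_Seq: "hvalid A c0 C \<Longrightarrow> hvalid C c1 B \<Longrightarrow> hvalid A (Seq c0 c1) B"
  unfolding hvalid_def by (blast elim: exec_SeqE)

lemma hvalid_If:
  "hvalid (AAnd A (emb_b b)) c0 B \<Longrightarrow> hvalid (AAnd A (ANot (emb_b b))) c1 B
   \<Longrightarrow> hvalid A (If b c0 c1) B"
  unfolding hvalid_def by (auto elim: exec_IfE)

lemma hvalid_While:
  assumes "hvalid (AAnd A (emb_b b)) c A"
  shows "hvalid A (While b c) (AAnd A (ANot (emb_b b)))"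
  unfolding hvalid_def
proof (intro allI impI)
  fix I s s'
  assume exec: "exec (While b c) s s'" and init: "sat s I A"
  have step: "\<And>t t'. sat t I A \<Longrightarrow> bval b t \<Longrightarrow> exec c t t' \<Longrightarrow> sat t' I A"
    using assms by (simp add: hvalid_def)
  from exec_While_invariant[where P = "\<lambda>t. sat t I A", OF exec step init] show "sat s' I (AAnd A (ANot (emb_b b)))"
    by simp
qed

lemma hvalid_conseq:
  "valid_assn (AImp A A') \<Longrightarrow> hvalid A' c B' \<Longrightarrow> valid_assn (AImp B' B) \<Longrightarrow> hvalid A c B"
  unfolding hvalid_def valid_assn_def by simp blast

text \<open>An execution of a parallel composition runs through both orders of its components, so
  soundness only needs the one where c0 runs first.\<close>

lemma hvalid_Par: "hvalid A c0 C \<Longrightarrow> hvalid C c1 B \<Longrightarrow> hvalid A (Par c0 c1) B"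
  unfolding hvalid_def by (blast elim: exec_ParE)

theorem mainTheorem5:
  fixes A B :: "('l, 'i) assn" and c :: "'l com"
  assumes "hoare A c B"
  shows "hvalid A c B"
  using assms
  by (induction rule: hoare.induct)
    (auto intro: hvalid_Skip hvalid_Assign hvalid_Seq hvalid_If hvalid_While hvalid_conseq hvalid_Par)

end
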